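(* For a liner $X$ the following are equivalent: (1) $X$ is Proclus; (2) $X$ is proaffine and $3$-proregular; (3) for every line $L\subseteq X$ and points $o\in L$, $x\in X\setminus L$, $y\in\overline{L\cup\{x\}}$, the set $\{v\in\overline{ox}:\overline{vy}\cap L=\varnothing\}$ contains at most one point.
   Context: A liner is a set $X$ of points with a family of subsets called lines such that any two distinct points lie in a unique line and every line contains at least two points. For distinct $x,y$, $\overline{xy}$ is the line through them and $\overline{xx}:=\{x\}$. A set is flat if it contains $\overline{xy}$ for all its distinct points; $\overline A$ is the smallest flat containing $A$; the rank $\|A\|$ is the smallest cardinality of $B\subseteq X$ with $A\subseteq\overline B$; a plane is a flat of rank 3. $X$ is Proclus if for every plane $P$, line $L\subseteq P$ and point $x\in P\setminus L$ there is at most one line $\Lambda$ with $x\in\Lambda\subseteq P\setminus L$. $X$ is proaffine if for all $o,x,y\in X$ and $p\in\overline{xy}\setminus\overline{ox}$ there exists $u\in\overline{oy}$ such that $\overline{vp}\cap\overline{ox}\ne\varnothing$ for every $v\in\overline{oy}\setminus\{u\}$. $X$ is $3$-proregular if for every set $A\subseteq X$ with $|A|<3$ and all points $o\in\overline A$, $p\in X\setminus\overline A$ with $\overline{op}\ne\{o,p\}$, we have $\overline{\{p\}\cup A}=\bigcup_{u\in\overline{op}}\bigcup_{a\in\overline A}\overline{ua}$. *)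

theory Defs
  imports Main
begin

definition liner :: "'a set \<Rightarrow> 'a set set \<Rightarrow> bool" where
  "liner X Ls \<longleftrightarrow>
     (\<forall>L\<in>Ls. L \<subseteq> X \<and> (\<exists>a b. a \<noteq> b \<and> a \<in> L \<and> b \<in> L)) \<and>
     (\<forall>x\<in>X. \<forall>y\<in>X. x \<noteq> y \<longrightarrow> (\<exists>!L. L \<in> Ls \<and> x \<in> L \<and> y \<in> L))"

definition line_through :: "'a set set \<Rightarrow> 'a \<Rightarrow> 'a \<Rightarrow> 'a set" where
  "line_through Ls x y = (if x = y then {x} else (THE L. L \<in> Ls \<and> x \<in> L \<and> y \<in> L))"

definition flat :: "'a set \<Rightarrow> 'a set set \<Rightarrow> 'a set \<Rightarrow> bool" where
  "flat X Ls A \<longleftrightarrow> A \<subseteq> X \<and> (\<forall>x\<in>A. \<forall>y\<in>A. x \<noteq> y \<longrightarrow> line_through Ls x y \<subseteq> A)"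

definition flat_hull :: "'a set \<Rightarrow> 'a set set \<Rightarrow> 'a set \<Rightarrow> 'a set" where
  "flat_hull X Ls A = \<Inter>{F. flat X Ls F \<and> A \<subseteq> F}"

definition has_rank :: "'a set \<Rightarrow> 'a set set \<Rightarrow> 'a set \<Rightarrow> nat \<Rightarrow> bool" where
  "has_rank X Ls A n \<longleftrightarrow>
     (\<exists>B. B \<subseteq> X \<and> finite B \<and> card B = n \<and> A \<subseteq> flat_hull X Ls B) \<and>
     (\<forall>B. B \<subseteq> X \<and> finite B \<and> A \<subseteq> flat_hull X Ls B \<longrightarrow> n \<le> card B)"

definition plane :: "'a set \<Rightarrow> 'a set set \<Rightarrow> 'a set \<Rightarrow> bool" where
  "plane X Ls P \<longleftrightarrow> flat X Ls P \<and> has_rank X Ls P 3"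

definition proclus :: "'a set \<Rightarrow> 'a set set \<Rightarrow> bool" where
  "proclus X Ls \<longleftrightarrow>
     (\<forall>P L x. plane X Ls P \<and> L \<in> Ls \<and> L \<subseteq> P \<and> x \<in> P - L \<longrightarrow>
        (\<forall>\<Lambda>1 \<Lambda>2. \<Lambda>1 \<in> Ls \<and> x \<in> \<Lambda>1 \<and> \<Lambda>1 \<subseteq> P - L \<and>
                  \<Lambda>2 \<in> Ls \<and> x \<in> \<Lambda>2 \<and> \<Lambda>2 \<subseteq> P - L \<longrightarrow> \<Lambda>1 = \<Lambda>2))"

definition proaffine :: "'a set \<Rightarrow> 'a set set \<Rightarrow> bool" where
  "proaffine X Ls \<longleftrightarrow>
     (\<forall>oo\<in>X. \<forall>x\<in>X. \<forall>y\<in>X. \<forall>p \<in> line_through Ls x y - line_through Ls oo x.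
        (\<exists>u \<in> line_through Ls oo y. \<forall>v \<in> line_through Ls oo y - {u}.
            line_through Ls v p \<inter> line_through Ls oo x \<noteq> {}))"

definition proregular3 :: "'a set \<Rightarrow> 'a set set \<Rightarrow> bool" where
  "proregular3 X Ls \<longleftrightarrow>
     (\<forall>A oo p. A \<subseteq> X \<and> finite A \<and> card A < 3 \<and> oo \<in> flat_hull X Ls A \<and>
        p \<in> X - flat_hull X Ls A \<and> line_through Ls oo p \<noteq> {oo, p} \<longrightarrow>
        flat_hull X Ls (insert p A) =
          (\<Union>u \<in> line_through Ls oo p. \<Union>a \<in> flat_hull X Ls A. line_through Ls u a))"

definition cond3 :: "'a set \<Rightarrow> 'a set set \<Rightarrow> bool" where
  "cond3 X Ls \<longleftrightarrow>
     (\<forall>L\<in>Ls. \<forall>oo\<in>L. \<forall>x \<in> X - L. \<forall>y \<in> flat_hull X Ls (L \<union> {x}).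
        (\<forall>v w. v \<in> line_through Ls oo x \<and> line_through Ls v y \<inter> L = {} \<and>
               w \<in> line_through Ls oo x \<and> line_through Ls w y \<inter> L = {} \<longrightarrow> v = w))"

end

theory Submission
  imports Defs
begin

(* Say that v sees y past a line L if the line vy misses L; condition (3) allows at most
   one point of a line ox (o in L) to see a given point y of the plane hull (L + x) past L.

   (3) implies 3-proregularity: if ox has a third point q, then y is seen from x or from q
   along a line meeting L, so y lies on a line joining ox to L.  3-proregularity in turn
   yields the exchange law hull (M + r) = hull (M + r0) for r in hull (M + r0) outside
   the line M, so a plane is the hull of any of its lines together with any point off it.
   Hence (3) holds for every line and point of an arbitrary plane.  Two distinct lines
   through x missing L then lead to a contradiction: for a third point w of a line ox, the
   line from w to a point b of the second line meets the first one in a point a, and both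
   x and w see a past L, although they are distinct points of the line ow.

   Conversely, Proclus' axiom in the plane hull (L + x) gives (3) directly.  Under
   3-proregularity y lies on a line ut joining ox to L, and proaffinity at o, t, u leaves at
   most one point of ou = ox that does not see y across ot = L. *)

locale liner_space =
  fixes X :: "'a set" and Ls :: "'a set set"
  assumes liner: "liner X Ls"
begin

abbreviation line :: "'a \<Rightarrow> 'a \<Rightarrow> 'a set" where
  "line x y \<equiv> line_through Ls x y"

abbreviation hull :: "'a set \<Rightarrow> 'a set" where
  "hull A \<equiv> flat_hull X Ls A"

lemma Ls_subset_X: "L \<in> Ls \<Longrightarrow> L \<subseteq> X"
  using liner[unfolded liner_def, THEN conjunct1] by blast

lemma line_obtain_two_points:
  assumes "L \<in> Ls"
  obtains a b where "a \<noteq> b" "a \<in> L" "b \<in> L"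
  using assms liner[unfolded liner_def, THEN conjunct1] by blast

lemma line_exists_unique: "x \<in> X \<Longrightarrow> y \<in> X \<Longrightarrow> x \<noteq> y \<Longrightarrow> \<exists>!L. L \<in> Ls \<and> x \<in> L \<and> y \<in> L"
  using liner[unfolded liner_def, THEN conjunct2] by blast

lemma line_unique:
  assumes "L \<in> Ls" "M \<in> Ls" "x \<in> L" "y \<in> L" "x \<in> M" "y \<in> M" "x \<noteq> y"
  shows "L = M"
  using line_exists_unique[of x y] Ls_subset_X assms by blast

lemma line_through_distinct:
  assumes "x \<in> X" "y \<in> X" "x \<noteq> y"
  shows "line x y \<in> Ls \<and> x \<in> line x y \<and> y \<in> line x y"
  using theI'[OF line_exists_unique[OF assms]] assms by (simp add: line_through_def)

lemma line_in_Ls: "x \<in> X \<Longrightarrow> y \<in> X \<Longrightarrow> x \<noteq> y \<Longrightarrow> line x y \<in> Ls"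
  using line_through_distinct by blast

lemma line_refl [simp]: "line x x = {x}"
  by (simp add: line_through_def)

lemma left_in_line: "x \<in> X \<Longrightarrow> y \<in> X \<Longrightarrow> x \<in> line x y"
  using line_through_distinct by (cases "x = y") auto

lemma right_in_line: "x \<in> X \<Longrightarrow> y \<in> X \<Longrightarrow> y \<in> line x y"
  using line_through_distinct by (cases "x = y") auto

lemma line_eqI:
  assumes "L \<in> Ls" "x \<in> L" "y \<in> L" "x \<noteq> y"
  shows "line x y = L"
proof -
  have "x \<in> X" "y \<in> X" using assms Ls_subset_X by auto
  then show ?thesis using line_through_distinct line_unique assms by blast
qed

lemma line_subset_line: "L \<in> Ls \<Longrightarrow> x \<in> L \<Longrightarrow> y \<in> L \<Longrightarrow> line x y \<subseteq> L"
  using line_eqI by (cases "x = y") auto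

lemma line_subset_X: "x \<in> X \<Longrightarrow> y \<in> X \<Longrightarrow> line x y \<subseteq> X"
  using line_through_distinct Ls_subset_X by (cases "x = y") auto

lemma line_commute: "x \<in> X \<Longrightarrow> y \<in> X \<Longrightarrow> line x y = line y x"
  using line_through_distinct line_eqI by (cases "x = y") auto

lemma line_eq_line:
  "x \<in> X \<Longrightarrow> y \<in> X \<Longrightarrow> x \<noteq> y \<Longrightarrow> u \<in> line x y \<Longrightarrow> v \<in> line x y \<Longrightarrow> u \<noteq> v
    \<Longrightarrow> line u v = line x y"
  using line_eqI line_in_Ls by blast

lemma mem_line_swap:
  assumes "x \<in> X" "y \<in> X" "z \<in> line x y" "z \<noteq> x"
  shows "y \<in> line x z"
proof -
  have "x \<noteq> y" using assms by auto
  then show ?thesis using line_eq_line[of x y x z] assms left_in_line right_in_line by auto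
qed

lemma point_off_line:
  assumes "L \<in> Ls" "oo \<in> L" "p \<in> X - L" "v \<in> line oo p" "v \<noteq> oo"
  shows "v \<notin> L"
proof
  assume "v \<in> L"
  have X: "oo \<in> X" "p \<in> X" "oo \<noteq> p" using assms Ls_subset_X by auto
  have "L = line oo v" using line_eqI[OF assms(1,2) \<open>v \<in> L\<close>] assms(5) by simp
  also have "\<dots> = line oo p" using line_eq_line[OF X left_in_line[OF X(1,2)] assms(4)] assms(5) by simp
  finally show False using right_in_line[OF X(1,2)] assms(3) by simp
qed

lemma line_flat: "L \<in> Ls \<Longrightarrow> flat X Ls L"
  unfolding flat_def using Ls_subset_X line_eqI by auto

lemma flat_line_subset: "flat X Ls F \<Longrightarrow> x \<in> F \<Longrightarrow> y \<in> F \<Longrightarrow> line x y \<subseteq> F"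
  unfolding flat_def by (cases "x = y") auto

lemma flat_X: "flat X Ls X"
  unfolding flat_def using line_subset_X by auto

lemma hull_minimal: "flat X Ls F \<Longrightarrow> A \<subseteq> F \<Longrightarrow> hull A \<subseteq> F"
  unfolding flat_hull_def by auto

lemma hull_subset_X: "A \<subseteq> X \<Longrightarrow> hull A \<subseteq> X"
  using hull_minimal[OF flat_X] by auto

lemma hull_subset: "A \<subseteq> X \<Longrightarrow> A \<subseteq> hull A"
  unfolding flat_hull_def by auto

lemma flat_hull:
  assumes "A \<subseteq> X"
  shows "flat X Ls (hull A)"
  unfolding flat_def
proof (intro conjI ballI impI)
  show "hull A \<subseteq> X" using hull_subset_X assms .
  fix x y assume "x \<in> hull A" "y \<in> hull A"
  then show "line x y \<subseteq> hull A" unfolding flat_hull_def using flat_line_subset by blast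
qed

lemma hull_mono: "A \<subseteq> B \<Longrightarrow> B \<subseteq> X \<Longrightarrow> hull A \<subseteq> hull B"
  by (meson flat_hull hull_minimal hull_subset order_trans)

lemma hull_empty: "hull {} = {}"
  using hull_minimal[of "{}"] unfolding flat_def by auto

lemma hull_singleton: "x \<in> X \<Longrightarrow> hull {x} = {x}"
  using hull_minimal[of "{x}"] hull_subset[of "{x}"] unfolding flat_def by auto

lemma hull_pair:
  assumes xy: "x \<in> X" "y \<in> X"
  shows "hull {x, y} = line x y"
proof (cases "x = y")
  case False
  show ?thesis
  proof
    show "hull {x, y} \<subseteq> line x y"
      using hull_minimal[OF line_flat[OF line_in_Ls]] line_through_distinct xy False by simp
    show "line x y \<subseteq> hull {x, y}"
      using flat_line_subset[OF flat_hull] hull_subset[of "{x, y}"] xy by auto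
  qed
qed (simp add: hull_singleton xy)

lemma hull_line_insert:
  assumes "L \<in> Ls" "a \<in> L" "b \<in> L" "a \<noteq> b" "x \<in> X"
  shows "hull (L \<union> {x}) = hull {x, a, b}"
proof
  have abx: "{x, a, b} \<subseteq> X" using assms Ls_subset_X by auto
  have "L = hull {a, b}" using hull_pair[of a b] line_eqI[OF assms(1-4)] abx by simp
  also have "\<dots> \<subseteq> hull {x, a, b}" using hull_mono abx by auto
  finally show "hull (L \<union> {x}) \<subseteq> hull {x, a, b}"
    using hull_minimal[OF flat_hull[OF abx]] hull_subset[OF abx] by auto
  show "hull {x, a, b} \<subseteq> hull (L \<union> {x})"
    using hull_mono[of "{x, a, b}" "L \<union> {x}"] Ls_subset_X assms by auto
qed

lemma flat_line_insert_if_two_point_lines: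
  assumes M: "M \<in> Ls" and r: "r \<in> X - M" and two_point: "\<forall>m\<in>M. line m r = {m, r}"
  shows "flat X Ls (M \<union> {r})"
  unfolding flat_def
proof (intro conjI ballI impI)
  show "M \<union> {r} \<subseteq> X" using Ls_subset_X M r by blast
  fix x y assume xy: "x \<in> M \<union> {r}" "y \<in> M \<union> {r}" "x \<noteq> y"
  then consider "x \<in> M" "y \<in> M" | "x \<in> M" "y = r" | "x = r" "y \<in> M" by blast
  then show "line x y \<subseteq> M \<union> {r}"
  proof cases
    case 1 then show ?thesis using line_subset_line[OF M] by blast
  next
    case 2 then show ?thesis using two_point by auto
  next
    case 3
    then have "line x y = {y, r}" using two_point line_commute[of r y] Ls_subset_X M r by auto
    then show ?thesis using 3 by auto
  qed
qed

lemma proregular3E: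
  assumes pr: "proregular3 X Ls" and L: "L \<in> Ls" "oo \<in> L" and p: "p \<in> X - L"
    and long: "line oo p \<noteq> {oo, p}" and y: "y \<in> hull (L \<union> {p})"
  obtains u t where "u \<in> line oo p" "t \<in> L" "y \<in> line u t"
proof -
  obtain a b where ab: "a \<noteq> b" "a \<in> L" "b \<in> L" using line_obtain_two_points L(1) by blast
  have abX: "{a, b} \<subseteq> X" using ab Ls_subset_X L by auto
  have hull_ab: "hull {a, b} = L" using hull_pair line_eqI[OF L(1) ab(2,3,1)] abX by simp
  have "{a, b} \<subseteq> X \<and> finite {a, b} \<and> card {a, b} < 3 \<and> oo \<in> hull {a, b} \<and>
      p \<in> X - hull {a, b} \<and> line oo p \<noteq> {oo, p}"
    using abX ab(1) L(2) p long hull_ab by simp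
  then have "hull (insert p {a, b}) = (\<Union>u \<in> line oo p. \<Union>t \<in> L. line u t)"
    using pr[unfolded proregular3_def, rule_format, of "{a, b}" oo p] hull_ab by simp
  moreover have "hull (insert p {a, b}) = hull (L \<union> {p})"
    using hull_line_insert[OF L(1) ab(2,3,1)] p by simp
  ultimately show ?thesis using that y by auto
qed

lemma UN_lines_subset_hull_insert:
  assumes A: "A \<subseteq> X" and oo: "oo \<in> hull A" and p: "p \<in> X"
  shows "(\<Union>u \<in> line oo p. \<Union>a \<in> hull A. line u a) \<subseteq> hull (insert p A)"
proof -
  let ?H = "hull (insert p A)"
  have pA: "insert p A \<subseteq> X" using A p by simp
  have H: "flat X Ls ?H" using flat_hull[OF pA] .
  have hull_A: "hull A \<subseteq> ?H" using hull_mono[OF _ pA] by blast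
  moreover have "p \<in> ?H" using hull_subset[OF pA] by blast
  ultimately have "line oo p \<subseteq> ?H" using flat_line_subset[OF H] oo by blast
  then show ?thesis using flat_line_subset[OF H] hull_A by blast
qed

lemma proregular3I:
  assumes cover: "\<And>L oo p y. L \<in> Ls \<Longrightarrow> oo \<in> L \<Longrightarrow> p \<in> X - L \<Longrightarrow> line oo p \<noteq> {oo, p}
      \<Longrightarrow> y \<in> hull (L \<union> {p}) \<Longrightarrow> \<exists>u \<in> line oo p. \<exists>t \<in> L. y \<in> line u t"
  shows "proregular3 X Ls"
  unfolding proregular3_def
proof (intro allI impI, elim conjE)
  fix A oo p
  assume A: "A \<subseteq> X" "finite A" "card A < 3" and oo: "oo \<in> hull A" and p: "p \<in> X - hull A"
    and long: "line oo p \<noteq> {oo, p}"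
  have "hull (insert p A) \<subseteq> (\<Union>u \<in> line oo p. \<Union>a \<in> hull A. line u a)"
  proof -
    have "A \<noteq> {}" using oo hull_empty by auto
    then have "card A = 1 \<or> card A = 2" using A card_gt_0_iff[of A] by linarith
    then consider a where "A = {a}" | a b where "A = {a, b}" "a \<noteq> b"
      by (metis card_1_singletonE card_2_iff)
    then show ?thesis
    proof cases
      case (1 a)
      then have a: "a \<in> X" "hull A = {a}" "oo = a" using oo hull_singleton A by auto
      have "hull (insert p A) = line a p" using 1 hull_pair[of p a] line_commute[of p a] a p by simp
      moreover have "y \<in> line y a" if "y \<in> line a p" for y
        using left_in_line line_subset_X[of a p] a p that by auto
      ultimately show ?thesis using a by auto
    next
      case (2 a b)
      then have L: "hull A \<in> Ls" "hull A = line a b" using hull_pair line_in_Ls A by auto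
      have "a \<in> hull A" "b \<in> hull A" using 2 hull_subset[OF A(1)] by auto
      then have "hull (insert p A) = hull (hull A \<union> {p})"
        using hull_line_insert[OF L(1) _ _ \<open>a \<noteq> b\<close>] 2 p by (simp add: insert_commute)
      then show ?thesis using cover[OF L(1) oo _ long] p by auto
    qed
  qed
  then show "hull (insert p A) = (\<Union>u \<in> line oo p. \<Union>a \<in> hull A. line u a)"
    using UN_lines_subset_hull_insert A oo p by blast
qed

lemma hull_line_insert_exchange:
  assumes pr: "proregular3 X Ls" and M: "M \<in> Ls" and r0: "r0 \<in> X - M"
    and r: "r \<in> hull (M \<union> {r0}) - M"
  shows "r0 \<in> hull (M \<union> {r})"
proof -
  have MX: "M \<subseteq> X" using Ls_subset_X M by blast
  have rX: "r \<in> X" using r hull_subset_X[of "M \<union> {r0}"] MX r0 by blast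
  define Q where "Q = hull (M \<union> {r})"
  have Q: "flat X Ls Q" "M \<subseteq> Q" "r \<in> Q"
    unfolding Q_def using flat_hull hull_subset[of "M \<union> {r}"] MX rX by auto
  show ?thesis
  proof (cases "\<exists>oo\<in>M. line oo r0 \<noteq> {oo, r0}")
    case True
    then obtain oo where oo: "oo \<in> M" "line oo r0 \<noteq> {oo, r0}" by blast
    obtain u t where ut: "u \<in> line oo r0" "t \<in> M" "r \<in> line u t"
      using proregular3E[OF pr M oo(1) r0 oo(2)] r by blast
    have ooX: "oo \<in> X" and tX: "t \<in> X" using oo ut MX by auto
    have uX: "u \<in> X" using ut line_subset_X ooX r0 by blast
    have "u \<noteq> oo" using ut line_subset_line[OF M oo(1) ut(2)] r by auto
    moreover have "u \<in> Q"
      using mem_line_swap[OF tX uX] line_commute[OF uX tX] ut r flat_line_subset[OF Q(1)] Q(2,3)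
      by blast
    ultimately have "line oo u \<subseteq> Q" "line oo u = line oo r0"
      using flat_line_subset[OF Q(1)] Q(2) oo(1)
        line_eq_line[OF ooX _ _ left_in_line[OF ooX] ut(1)] r0 by auto
    then show ?thesis using right_in_line[OF ooX] r0 unfolding Q_def by auto
  next
    case False
    then have "flat X Ls (M \<union> {r0})"
      using flat_line_insert_if_two_point_lines[OF M r0] by auto
    then have "r = r0" using hull_minimal[of "M \<union> {r0}" "M \<union> {r0}"] r by auto
    then show ?thesis using Q(3) unfolding Q_def by simp
  qed
qed

lemma hull_line_insert_eq:
  assumes pr: "proregular3 X Ls" and M: "M \<in> Ls" and r0: "r0 \<in> X - M"
    and r: "r \<in> hull (M \<union> {r0}) - M"
  shows "hull (M \<union> {r}) = hull (M \<union> {r0})"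
proof -
  have MX: "M \<subseteq> X" using Ls_subset_X M by blast
  let ?H = "hull (M \<union> {r0})" and ?Q = "hull (M \<union> {r})"
  have H: "flat X Ls ?H" "M \<union> {r0} \<subseteq> ?H"
    using flat_hull hull_subset[of "M \<union> {r0}"] MX r0 by auto
  have rX: "r \<in> X" using r hull_subset_X[of "M \<union> {r0}"] MX r0 by blast
  have Q: "flat X Ls ?Q" "M \<union> {r} \<subseteq> ?Q"
    using flat_hull hull_subset[of "M \<union> {r}"] MX rX by auto
  show ?thesis
  proof
    show "?Q \<subseteq> ?H" by (rule hull_minimal[OF H(1)]) (use H(2) r in auto)
    show "?H \<subseteq> ?Q"
      by (rule hull_minimal[OF Q(1)]) (use Q(2) hull_line_insert_exchange[OF pr M r0 r] in auto)
  qed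
qed

lemma hull_line_insert_swap_meeting:
  assumes pr: "proregular3 X Ls" and M: "M \<in> Ls" and L: "L \<in> Ls" "L \<noteq> M"
    and p: "p \<in> L" "p \<in> M" and r0: "r0 \<in> X - M" and LH: "L \<subseteq> hull (M \<union> {r0})"
  obtains z where "z \<in> X - L" "hull (L \<union> {z}) = hull (M \<union> {r0})"
proof -
  let ?H = "hull (M \<union> {r0})"
  have X: "M \<subseteq> X" "L \<subseteq> X" using Ls_subset_X M L by auto
  have H: "flat X Ls ?H" "M \<subseteq> ?H" using flat_hull hull_subset[of "M \<union> {r0}"] X r0 by auto
  obtain z where z: "z \<in> M" "z \<noteq> p" using line_obtain_two_points[OF M] by metis
  obtain r where r: "r \<in> L" "r \<noteq> p" using line_obtain_two_points[OF L(1)] by metis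
  have "z \<notin> L" using line_unique[OF L(1) M p(1) _ p(2) z(1)] z L(2) by blast
  have "r \<notin> M" using line_unique[OF L(1) M p(1) r(1) p(2)] r L(2) by blast
  define Q where "Q = hull (L \<union> {z})"
  have Q: "flat X Ls Q" "L \<union> {z} \<subseteq> Q"
    unfolding Q_def using flat_hull hull_subset[of "L \<union> {z}"] X z by auto
  have "M = line p z" using line_eqI[OF M p(2) z(1)] z(2) by simp
  also have "\<dots> \<subseteq> Q" using flat_line_subset[OF Q(1)] Q(2) p(1) by auto
  finally have "M \<subseteq> Q" .
  have "?H = hull (M \<union> {r})" using hull_line_insert_eq[OF pr M r0] r LH \<open>r \<notin> M\<close> by auto
  also have "\<dots> \<subseteq> Q" by (rule hull_minimal[OF Q(1)]) (use \<open>M \<subseteq> Q\<close> Q(2) r in auto)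
  finally have "?H \<subseteq> Q" .
  moreover have "Q \<subseteq> ?H" unfolding Q_def by (rule hull_minimal[OF H(1)]) (use LH H(2) z in auto)
  ultimately show ?thesis using that \<open>z \<notin> L\<close> z X unfolding Q_def by blast
qed

lemma hull_line_insert_swap:
  assumes pr: "proregular3 X Ls" and M: "M \<in> Ls" and L: "L \<in> Ls"
    and r0: "r0 \<in> X - M" and LH: "L \<subseteq> hull (M \<union> {r0})"
  obtains z where "z \<in> X - L" "hull (L \<union> {z}) = hull (M \<union> {r0})"
proof -
  let ?H = "hull (M \<union> {r0})"
  consider "L = M" | p where "p \<in> L" "p \<in> M" "L \<noteq> M" | "L \<inter> M = {}" by blast
  then show ?thesis
  proof cases
    case 1
    then show ?thesis using that r0 by blast
  next
    case (2 p)
    then show ?thesis using hull_line_insert_swap_meeting[OF pr M L(1) _ _ _ r0 LH] that by blast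
  next
    case 3
    obtain p m where p: "p \<in> L" and m: "m \<in> M"
      using line_obtain_two_points[OF L] line_obtain_two_points[OF M] by metis
    have X: "p \<in> X" "m \<in> X" "M \<subseteq> X" using p m Ls_subset_X L M by auto
    have "p \<noteq> m" using 3 p m by blast
    define K where "K = line p m"
    have K: "K \<in> Ls" "p \<in> K" "m \<in> K"
      unfolding K_def using line_through_distinct[OF X(1,2) \<open>p \<noteq> m\<close>] by auto
    have H: "flat X Ls ?H" "M \<subseteq> ?H" using flat_hull hull_subset[of "M \<union> {r0}"] X(3) r0 by auto
    have "K \<subseteq> ?H" unfolding K_def using flat_line_subset[OF H(1)] p m LH H(2) by auto
    moreover have "K \<noteq> M" using K(2) p 3 by blast
    ultimately obtain z where z: "z \<in> X - K" "hull (K \<union> {z}) = ?H"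
      using hull_line_insert_swap_meeting[OF pr M K(1) _ K(3) m r0] by blast
    have "L \<noteq> K" using K(3) m 3 by blast
    then show ?thesis
      using hull_line_insert_swap_meeting[OF pr K(1) L _ p K(2) z(1)] LH z(2) that by auto
  qed
qed

lemma plane_subset_hull_line_insert:
  assumes "plane X Ls P"
  obtains M r where "M \<in> Ls" "r \<in> X - M" "P \<subseteq> hull (M \<union> {r})"
proof -
  have rank: "has_rank X Ls P 3" using assms unfolding plane_def by simp
  obtain B where B: "B \<subseteq> X" "finite B" "card B = 3" "P \<subseteq> hull B"
    using rank[unfolded has_rank_def, THEN conjunct1] by blast
  have min: "\<And>B'. B' \<subseteq> X \<Longrightarrow> finite B' \<Longrightarrow> P \<subseteq> hull B' \<Longrightarrow> 3 \<le> card B'"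
    using rank[unfolded has_rank_def, THEN conjunct2] by blast
  obtain a b c where abc: "B = {a, b, c}" "a \<noteq> b" "b \<noteq> c" "a \<noteq> c"
    using B(3) unfolding card_3_iff by blast
  have X: "a \<in> X" "b \<in> X" "c \<in> X" using B(1) abc(1) by auto
  have "c \<notin> line a b"
  proof
    assume "c \<in> line a b"
    then have "hull B \<subseteq> line a b"
      using hull_minimal[OF line_flat[OF line_in_Ls[OF X(1,2) abc(2)]]] abc(1)
        left_in_line right_in_line X by auto
    then have "P \<subseteq> hull {a, b}" using B(4) hull_pair X by auto
    then show False using min[of "{a, b}"] X abc(2) by auto
  qed
  moreover have "hull B = hull (line a b \<union> {c})"
    using hull_line_insert[OF line_in_Ls[OF X(1,2) abc(2)] left_in_line right_in_line abc(2)] abc(1) X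
    by (simp add: insert_commute)
  ultimately show ?thesis using that line_in_Ls[OF X(1,2) abc(2)] X(3) B(4) by auto
qed

lemma plane_eq_hull_line_insert:
  assumes pr: "proregular3 X Ls" and P: "plane X Ls P" and L: "L \<in> Ls" "L \<subseteq> P"
    and z: "z \<in> P - L"
  shows "hull (L \<union> {z}) = P"
proof -
  obtain M r where M: "M \<in> Ls" "r \<in> X - M" "P \<subseteq> hull (M \<union> {r})"
    using plane_subset_hull_line_insert[OF P] by blast
  obtain z0 where z0: "z0 \<in> X - L" "hull (L \<union> {z0}) = hull (M \<union> {r})"
    using hull_line_insert_swap[OF pr M(1) L(1) M(2)] L(2) M(3) by blast
  then have "hull (L \<union> {z}) = hull (M \<union> {r})"
    using hull_line_insert_eq[OF pr L(1) z0(1)] z M(3) by auto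
  moreover have "hull (L \<union> {z}) \<subseteq> P"
    using hull_minimal P L(2) z unfolding plane_def by auto
  ultimately show ?thesis using M(3) by auto
qed

lemma plane_hull_line_insert:
  assumes L: "L \<in> Ls" and x: "x \<in> X - L"
  shows "plane X Ls (hull (L \<union> {x}))"
  unfolding plane_def has_rank_def
proof (intro conjI allI impI; (elim conjE)?)
  have LX: "L \<subseteq> X" using Ls_subset_X L by blast
  then show "flat X Ls (hull (L \<union> {x}))" using flat_hull x by auto
  obtain a b where ab: "a \<noteq> b" "a \<in> L" "b \<in> L" using line_obtain_two_points L by blast
  have "x \<noteq> a" "x \<noteq> b" using x ab by auto
  then show "\<exists>B\<subseteq>X. finite B \<and> card B = 3 \<and> hull (L \<union> {x}) \<subseteq> hull B"
    using hull_line_insert[OF L ab(2,3,1)] ab LX x by (intro exI[of _ "{x, a, b}"]) auto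
  fix B assume B: "B \<subseteq> X" "finite B" "hull (L \<union> {x}) \<subseteq> hull B"
  have LxB: "L \<union> {x} \<subseteq> hull B" using B(3) hull_subset[of "L \<union> {x}"] LX x by blast
  show "3 \<le> card B"
  proof (rule ccontr)
    assume "\<not> 3 \<le> card B"
    then have "card B = 0 \<or> card B = 1 \<or> card B = 2" by linarith
    then obtain c d where cd: "c \<in> X" "d \<in> X" "B \<subseteq> {c, d}"
      using B(1,2) x by (elim disjE) (auto simp: card_1_singleton_iff card_2_iff)
    then have "L \<union> {x} \<subseteq> line c d" using LxB hull_mono[of B "{c, d}"] hull_pair by auto
    moreover have "c \<noteq> d"
    proof
      assume "c = d"
      then have "a = c" "b = c" using \<open>L \<union> {x} \<subseteq> line c d\<close> ab(2,3) by auto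
      then show False using ab(1) by simp
    qed
    ultimately have "line c d = L"
      using line_unique[OF line_in_Ls[OF cd(1,2)] L _ _ ab(2,3) ab(1)] ab by auto
    then show False using \<open>L \<union> {x} \<subseteq> line c d\<close> x by auto
  qed
qed

lemma cond3D:
  assumes "cond3 X Ls" "L \<in> Ls" "oo \<in> L" "x \<in> X - L" "y \<in> hull (L \<union> {x})"
    "v \<in> line oo x" "line v y \<inter> L = {}" "w \<in> line oo x" "line w y \<inter> L = {}"
  shows "v = w"
  using assms(1)[unfolded cond3_def, rule_format, OF assms(2-5)] assms(6-9) by blast

lemma collinear_eq_if_line_misses:
  assumes "oo \<in> L" "oo \<in> X" "x \<in> X" "v \<in> line oo x" "y \<in> line oo x" "line v y \<inter> L = {}"
  shows "v = y"
proof (rule ccontr)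
  assume "v \<noteq> y"
  then have "oo \<noteq> x" using assms(4,5) by auto
  then have "line v y = line oo x" using line_eq_line assms(2-5) \<open>v \<noteq> y\<close> by blast
  then show False using left_in_line[OF assms(2,3)] assms(1,6) by auto
qed

lemma cond3_on_joining_line:
  assumes c3: "cond3 X Ls" and L: "L \<in> Ls" "oo \<in> L" and p: "p \<in> X - L"
    and long: "line oo p \<noteq> {oo, p}" and y: "y \<in> hull (L \<union> {p})"
  shows "\<exists>u \<in> line oo p. \<exists>t \<in> L. y \<in> line u t"
proof -
  have ooX: "oo \<in> X" using L Ls_subset_X by auto
  have yX: "y \<in> X" using y hull_subset_X[of "L \<union> {p}"] Ls_subset_X L p by blast
  show ?thesis
  proof (cases "y \<in> L")
    case True
    then show ?thesis using left_in_line[OF ooX] right_in_line[OF ooX yX] p L(2) by blast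
  next
    case False
    obtain q where q: "q \<in> line oo p" "q \<noteq> oo" "q \<noteq> p"
      using long left_in_line[OF ooX] right_in_line[OF ooX] p by blast
    have "line p y \<inter> L \<noteq> {} \<or> line q y \<inter> L \<noteq> {}"
      using cond3D[OF c3 L p y right_in_line[OF ooX] _ q(1)] p q(3) by blast
    then obtain u t where u: "u \<in> line oo p" "u \<noteq> oo" and t: "t \<in> line u y" "t \<in> L"
      using q(1,2) right_in_line[OF ooX] p L(2) by blast
    have uX: "u \<in> X" using u line_subset_X[OF ooX] p by blast
    have "t \<noteq> u" using point_off_line[OF L p u] t(2) by blast
    then have "y \<in> line u t" using mem_line_swap[OF uX yX t(1)] by blast
    then show ?thesis using u t by blast
  qed
qed

lemma cond3_imp_proregular3: "cond3 X Ls \<Longrightarrow> proregular3 X Ls"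
  by (rule proregular3I) (rule cond3_on_joining_line)

lemma cond3_imp_proaffine:
  assumes c3: "cond3 X Ls"
  shows "proaffine X Ls"
  unfolding proaffine_def
proof (intro ballI)
  fix oo x y p
  assume X: "oo \<in> X" "x \<in> X" "y \<in> X" and p: "p \<in> line x y - line oo x"
  show "\<exists>u \<in> line oo y. \<forall>v \<in> line oo y - {u}. line v p \<inter> line oo x \<noteq> {}"
  proof (cases "oo = x")
    case True
    then have p_oy: "p \<in> line oo y" "p \<noteq> oo" using p by auto
    then have "oo \<noteq> y" by auto
    have "oo \<in> line v p" if "v \<in> line oo y - {p}" for v
      using line_eq_line[OF X(1,3) \<open>oo \<noteq> y\<close> _ p_oy(1)] that left_in_line[OF X(1,3)] by auto
    then show ?thesis using p_oy(1) True by (intro bexI[of _ p]) auto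
  next
    case False
    let ?L = "line oo x"
    have L: "?L \<in> Ls" "oo \<in> ?L" "x \<in> ?L" using line_through_distinct[OF X(1,2) False] by auto
    have "y \<notin> ?L"
    proof
      assume "y \<in> ?L"
      moreover have "x \<noteq> y" using p L(3) by auto
      ultimately have "line x y = ?L" using line_eqI[OF L(1,3)] by blast
      then show False using p by auto
    qed
    have LyX: "?L \<union> {y} \<subseteq> X" using Ls_subset_X[OF L(1)] X(3) by blast
    then have "x \<in> hull (?L \<union> {y})" "y \<in> hull (?L \<union> {y})" using hull_subset L(3) by blast+
    then have "p \<in> hull (?L \<union> {y})" using flat_line_subset[OF flat_hull[OF LyX]] p by blast
    then have unique: "v = w"
      if "v \<in> line oo y" "line v p \<inter> ?L = {}" "w \<in> line oo y" "line w p \<inter> ?L = {}" for v w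
      using cond3D[OF c3 L(1,2)] X(3) \<open>y \<notin> ?L\<close> that by blast
    show ?thesis
    proof (cases "\<exists>u \<in> line oo y. line u p \<inter> ?L = {}")
      case True
      then show ?thesis using unique by blast
    next
      case False
      then show ?thesis using left_in_line[OF X(1,3)] by blast
    qed
  qed
qed

lemma proclus_missing_lines_eq:
  assumes pc: "proclus X Ls" and P: "plane X Ls P" and L: "L \<in> Ls" "L \<subseteq> P" and y: "y \<in> P - L"
    and u: "u \<in> P" "u \<noteq> y" "line u y \<inter> L = {}" and w: "w \<in> P" "w \<noteq> y" "line w y \<inter> L = {}"
  shows "line u y = line w y"
proof -
  have flat: "flat X Ls P" using P unfolding plane_def by blast
  then have "P \<subseteq> X" unfolding flat_def by blast
  then have "line v y \<in> Ls \<and> y \<in> line v y \<and> line v y \<subseteq> P - L"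
    if "v \<in> P" "v \<noteq> y" "line v y \<inter> L = {}" for v
    using line_through_distinct[of v y] flat_line_subset[OF flat, of v y] that y by blast
  then have "line u y \<in> Ls \<and> y \<in> line u y \<and> line u y \<subseteq> P - L \<and>
      line w y \<in> Ls \<and> y \<in> line w y \<and> line w y \<subseteq> P - L"
    using u w by blast
  then show ?thesis
    using pc[unfolded proclus_def, rule_format, of P L y "line u y" "line w y"] P L y by blast
qed

lemma proclus_imp_cond3:
  assumes pc: "proclus X Ls"
  shows "cond3 X Ls"
  unfolding cond3_def
proof (intro ballI allI impI, elim conjE)
  fix L oo x y v w
  assume L: "L \<in> Ls" and oo: "oo \<in> L" and x: "x \<in> X - L" and y: "y \<in> hull (L \<union> {x})"
    and v: "v \<in> line oo x" "line v y \<inter> L = {}" and w: "w \<in> line oo x" "line w y \<inter> L = {}"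
  let ?Q = "hull (L \<union> {x})"
  have LxX: "L \<union> {x} \<subseteq> X" using Ls_subset_X L x by blast
  have ooX: "oo \<in> X" and yX: "y \<in> X" using LxX oo y hull_subset_X by blast+
  have vX: "v \<in> X" "w \<in> X" using v(1) w(1) line_subset_X[OF ooX] x by blast+
  have "line oo x \<subseteq> ?Q" using flat_line_subset[OF flat_hull] hull_subset LxX oo by blast
  show "v = w"
  proof (cases "y \<in> line oo x")
    case True
    then show ?thesis using collinear_eq_if_line_misses[OF oo ooX] x v w by (metis DiffD1)
  next
    case False
    then have "v \<noteq> y" "w \<noteq> y" using v(1) w(1) by auto
    moreover have "y \<notin> L" using v(2) right_in_line[OF vX(1) yX] by blast
    ultimately have "line v y = line w y"
      using proclus_missing_lines_eq[OF pc plane_hull_line_insert[OF L x] _ _ _ _ _ v(2) _ _ w(2)]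
        hull_subset[OF LxX] y v(1) w(1) \<open>line oo x \<subseteq> ?Q\<close> L by blast
    show "v = w"
    proof (rule ccontr)
      assume "v \<noteq> w"
      have "w \<in> line v y" using \<open>line v y = line w y\<close> left_in_line[OF vX(2) yX] by simp
      then have "line v w = line v y"
        using line_eq_line[OF vX(1) yX \<open>v \<noteq> y\<close> left_in_line[OF vX(1) yX]] \<open>v \<noteq> w\<close> by blast
      moreover have "line v w = line oo x"
        using line_eq_line[OF ooX _ _ v(1) w(1) \<open>v \<noteq> w\<close>] x oo by auto
      ultimately show False using False right_in_line[OF vX(1) yX] by simp
    qed
  qed
qed

lemma proaffineD:
  assumes "proaffine X Ls" "oo \<in> X" "x \<in> X" "y \<in> X" "p \<in> line x y - line oo x"
  obtains u where "u \<in> line oo y" "\<And>v. v \<in> line oo y - {u} \<Longrightarrow> line v p \<inter> line oo x \<noteq> {}"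
  using assms(1)[unfolded proaffine_def, rule_format, OF assms(2-5)] by blast

lemma proaffine_proregular3_imp_cond3:
  assumes pa: "proaffine X Ls" and pr: "proregular3 X Ls"
  shows "cond3 X Ls"
  unfolding cond3_def
proof (intro ballI allI impI, elim conjE)
  fix L oo x y v w
  assume L: "L \<in> Ls" and oo: "oo \<in> L" and x: "x \<in> X - L" and y: "y \<in> hull (L \<union> {x})"
    and v: "v \<in> line oo x" "line v y \<inter> L = {}" and w: "w \<in> line oo x" "line w y \<inter> L = {}"
  have ooX: "oo \<in> X" using L oo Ls_subset_X by blast
  have yX: "y \<in> X" using y hull_subset_X[of "L \<union> {x}"] Ls_subset_X L x by blast
  show "v = w"
  proof (rule ccontr)
    assume "v \<noteq> w"
    have "v \<noteq> oo" "w \<noteq> oo" using v(2) w(2) left_in_line[OF ooX yX] oo by auto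
    then have "line oo x \<noteq> {oo, x}" using v(1) w(1) \<open>v \<noteq> w\<close> by auto
    then obtain u t where u: "u \<in> line oo x" and t: "t \<in> L" and y_ut: "y \<in> line u t"
      using proregular3E[OF pr L oo x _ y] by blast
    have uX: "u \<in> X" and tX: "t \<in> X" using u t line_subset_X[OF ooX] Ls_subset_X L x by blast+
    have "y \<notin> L" using v(2) right_in_line[OF _ yX] v(1) line_subset_X[OF ooX] x by blast
    then have "u \<noteq> oo" using y_ut line_subset_line[OF L oo t] by blast
    have "t \<noteq> oo"
    proof
      assume "t = oo"
      then have "y \<in> line oo x"
        using y_ut line_subset_line[OF line_in_Ls[OF ooX] u left_in_line[OF ooX]] x oo by auto
      then show False
        using collinear_eq_if_line_misses[OF oo ooX] x v w \<open>v \<noteq> w\<close> by (metis DiffD1)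
    qed
    have ou: "line oo u = line oo x"
      using line_eq_line[OF ooX _ _ left_in_line[OF ooX] u] x oo \<open>u \<noteq> oo\<close> by auto
    have ot: "line oo t = L" using line_eqI[OF L oo t] \<open>t \<noteq> oo\<close> by simp
    have "y \<in> line t u - line oo t" using y_ut line_commute[OF uX tX] ot \<open>y \<notin> L\<close> by simp
    then obtain U where "\<And>v'. v' \<in> line oo u - {U} \<Longrightarrow> line v' y \<inter> line oo t \<noteq> {}"
      using proaffineD[OF pa ooX tX uX] by blast
    then show False using v w \<open>v \<noteq> w\<close> unfolding ou ot by blast
  qed
qed

lemma cond3_in_plane:
  assumes c3: "cond3 X Ls" and P: "plane X Ls P" and L: "L \<in> Ls" "L \<subseteq> P" and oo: "oo \<in> L"
    and z: "z \<in> P - L" and y: "y \<in> P"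
    and v: "v \<in> line oo z" "line v y \<inter> L = {}" and w: "w \<in> line oo z" "line w y \<inter> L = {}"
  shows "v = w"
proof -
  have "hull (L \<union> {z}) = P"
    using plane_eq_hull_line_insert[OF cond3_imp_proregular3[OF c3] P L z] .
  moreover have "P \<subseteq> X" using P unfolding plane_def flat_def by blast
  ultimately show ?thesis using cond3D[OF c3 L(1) oo _ _ v w] z y by auto
qed

context
  fixes P L x \<Lambda>1 \<Lambda>2
  assumes c3: "cond3 X Ls" and P: "plane X Ls P" and L: "L \<in> Ls" "L \<subseteq> P" and x: "x \<in> P - L"
    and \<Lambda>1: "\<Lambda>1 \<in> Ls" "x \<in> \<Lambda>1" "\<Lambda>1 \<subseteq> P - L" and \<Lambda>2: "\<Lambda>2 \<in> Ls" "x \<in> \<Lambda>2" "\<Lambda>2 \<subseteq> P - L"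
    and distinct: "\<Lambda>1 \<noteq> \<Lambda>2"
begin

private lemma P_subset_X: "P \<subseteq> X"
  using P unfolding plane_def flat_def by blast

private lemma parallels_meet_at_x: "a \<in> \<Lambda>1 \<Longrightarrow> a \<in> \<Lambda>2 \<Longrightarrow> a = x"
  using line_unique[OF \<Lambda>1(1) \<Lambda>2(1) \<Lambda>1(2) _ \<Lambda>2(2)] distinct by blast

private lemma line_between_parallels_avoids:
  assumes a: "a \<in> \<Lambda>1" "a \<noteq> x" and b: "b \<in> \<Lambda>2" "b \<noteq> x"
  shows "line a b \<inter> L = {}"
proof (rule ccontr)
  assume "line a b \<inter> L \<noteq> {}"
  then obtain t where t: "t \<in> line a b" "t \<in> L" by blast
  have "a \<noteq> b" using a b parallels_meet_at_x by blast
  have X: "a \<in> X" "b \<in> X" "t \<in> X" using a b t \<Lambda>1 \<Lambda>2 L Ls_subset_X by blast+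
  have "t \<noteq> a" using t \<Lambda>1(3) a by blast
  then have "b \<in> line t a" using mem_line_swap[OF X(1,2) t(1)] line_commute[OF X(1,3)] by simp
  have "line a x = \<Lambda>1" "line b x = \<Lambda>2" using line_eqI \<Lambda>1 \<Lambda>2 a b by blast+
  then have "a = b"
    using cond3_in_plane[OF c3 P L t(2) _ _ right_in_line[OF X(3,1)] _ \<open>b \<in> line t a\<close>, of x]
      a b \<Lambda>1(3) \<Lambda>2(3) x by blast
  then show False using \<open>a \<noteq> b\<close> by simp
qed

private lemma obtain_long_line_to_x:
  obtains oo w where "oo \<in> L" "w \<in> line oo x" "w \<noteq> oo" "w \<noteq> x"
proof -
  have "\<exists>oo\<in>L. \<exists>w\<in>line oo x. w \<noteq> oo \<and> w \<noteq> x"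
  proof (rule ccontr)
    assume "\<not> ?thesis"
    then have "\<forall>oo\<in>L. line oo x = {oo, x}"
      using left_in_line right_in_line Ls_subset_X[OF L(1)] P_subset_X x by blast
    then have "flat X Ls (L \<union> {x})"
      using flat_line_insert_if_two_point_lines[OF L(1)] x P_subset_X by blast
    moreover have "hull (L \<union> {x}) = P"
      using plane_eq_hull_line_insert[OF cond3_imp_proregular3[OF c3] P L x] .
    ultimately have "P \<subseteq> L \<union> {x}" using hull_minimal by blast
    moreover obtain a where "a \<in> \<Lambda>1" "a \<noteq> x" using line_obtain_two_points[OF \<Lambda>1(1)] by metis
    ultimately show False using \<Lambda>1(3) by blast
  qed
  then show ?thesis using that by blast
qed

private lemma line_to_parallel_meets_other:
  assumes oo: "oo \<in> L" and w: "w \<in> line oo x" "w \<noteq> oo" and b: "b \<in> \<Lambda>2" "b \<noteq> x"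
  shows "line w b \<inter> \<Lambda>1 \<noteq> {}"
proof
  assume wb: "line w b \<inter> \<Lambda>1 = {}"
  have X: "oo \<in> X" "b \<in> X" "x \<in> X" using oo b x \<Lambda>2 L Ls_subset_X by blast+
  have "line oo b \<inter> \<Lambda>1 = {}"
  proof (rule ccontr)
    assume "line oo b \<inter> \<Lambda>1 \<noteq> {}"
    then obtain a where a: "a \<in> line oo b" "a \<in> \<Lambda>1" by blast
    have "a \<noteq> b" using a(2) b parallels_meet_at_x by blast
    have "oo \<noteq> b" using oo b \<Lambda>2(3) by blast
    then have "oo \<in> line a b"
      using line_eq_line[OF X(1,2) _ a(1) right_in_line[OF X(1,2)] \<open>a \<noteq> b\<close>] left_in_line[OF X(1,2)]
      by simp
    moreover have "line a b \<inter> L = {}"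
    proof (cases "a = x")
      case True
      then show ?thesis using line_eqI[OF \<Lambda>2(1) \<Lambda>2(2) b(1)] b(2) \<Lambda>2(3) line_commute X(2,3) by auto
    qed (use line_between_parallels_avoids a b in blast)
    ultimately show False using oo by blast
  qed
  moreover have "oo \<in> P - \<Lambda>1" "b \<in> P" using oo L \<Lambda>1 \<Lambda>2 b by blast+
  moreover have "oo \<in> line x oo" "w \<in> line x oo"
    using right_in_line[OF X(3,1)] w(1) line_commute[OF X(1,3)] by auto
  ultimately have "oo = w"
    using cond3_in_plane[OF c3 P \<Lambda>1(1) _ \<Lambda>1(2)] wb \<Lambda>1(3) by blast
  then show False using w(2) by simp
qed

lemma cond3_no_two_parallels: False
proof -
  obtain oo w where oo: "oo \<in> L" and w: "w \<in> line oo x" "w \<noteq> oo" "w \<noteq> x"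
    using obtain_long_line_to_x by blast
  obtain b where b: "b \<in> \<Lambda>2" "b \<noteq> x" using line_obtain_two_points[OF \<Lambda>2(1)] by metis
  obtain a where a: "a \<in> line w b" "a \<in> \<Lambda>1"
    using line_to_parallel_meets_other[OF oo w(1,2) b] by blast
  have X: "oo \<in> X" "x \<in> X" "b \<in> X" using oo x b L \<Lambda>2 Ls_subset_X P_subset_X by blast+
  have "oo \<noteq> x" using oo x by blast
  have wX: "w \<in> X" using w(1) line_subset_X[OF X(1,2)] by blast
  have w_notin: "w \<notin> \<Lambda>" if "\<Lambda> \<in> Ls" "x \<in> \<Lambda>" "\<Lambda> \<subseteq> P - L" for \<Lambda>
    using point_off_line[OF that(1,2), of oo w] line_commute[OF X(1,2)] w oo that(3) X(1) by blast
  have "a \<noteq> x"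
  proof
    assume "a = x"
    then have "w \<in> line b x" using mem_line_swap[OF X(3) wX] a(1) line_commute[OF wX X(3)] b(2) by simp
    then show False using line_eqI[OF \<Lambda>2(1) b(1) \<Lambda>2(2) b(2)] w_notin[OF \<Lambda>2] by simp
  qed
  have "a \<noteq> b" using a(2) b parallels_meet_at_x by blast
  have "a \<noteq> w" using a(2) w_notin[OF \<Lambda>1] by blast
  have "w \<noteq> b" using b(1) w_notin[OF \<Lambda>2] by blast
  have "line w a = line w b"
    using line_eq_line[OF wX X(3) \<open>w \<noteq> b\<close> left_in_line[OF wX X(3)] a(1)] \<open>a \<noteq> w\<close> by simp
  moreover have "line a b = line w b"
    using line_eq_line[OF wX X(3) \<open>w \<noteq> b\<close> a(1) right_in_line[OF wX X(3)] \<open>a \<noteq> b\<close>] .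
  ultimately have wa: "line w a \<inter> L = {}" using line_between_parallels_avoids[OF a(2) \<open>a \<noteq> x\<close> b] by simp
  have xa: "line x a \<inter> L = {}"
    using line_eqI[OF \<Lambda>1(1,2) a(2)] \<open>a \<noteq> x\<close> \<Lambda>1(3) by auto
  have "line oo w = line oo x"
    using line_eq_line[OF X(1,2) \<open>oo \<noteq> x\<close> left_in_line[OF X(1,2)] w(1)] w(2) by auto
  moreover have "w \<in> P - L"
    using w(1) flat_line_subset[of P oo x] P oo x L(2) point_off_line[OF L(1) oo _ w(1,2)] X(2)
    unfolding plane_def by blast
  ultimately have "x = w"
    using cond3_in_plane[OF c3 P L oo _ _ _ xa _ wa] right_in_line[OF X(1) wX] right_in_line[OF X(1,2)]
      a(2) \<Lambda>1(3) by blast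
  then show False using w(3) by simp
qed

end

lemma cond3_imp_proclus:
  assumes c3: "cond3 X Ls"
  shows "proclus X Ls"
  unfolding proclus_def
proof (intro allI impI; elim conjE)
  fix P L x \<Lambda>1 \<Lambda>2
  assume "plane X Ls P" "L \<in> Ls" "L \<subseteq> P" "x \<in> P - L" "\<Lambda>1 \<in> Ls" "x \<in> \<Lambda>1" "\<Lambda>1 \<subseteq> P - L"
    "\<Lambda>2 \<in> Ls" "x \<in> \<Lambda>2" "\<Lambda>2 \<subseteq> P - L"
  then show "\<Lambda>1 = \<Lambda>2" using cond3_no_two_parallels[OF c3] by blast
qed

end

theorem theorem3p6p1:
  fixes X :: "'a set" and Ls :: "'a set set"
  assumes "liner X Ls"
  shows "(proclus X Ls \<longleftrightarrow> proaffine X Ls \<and> proregular3 X Ls) \<and>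
         (proclus X Ls \<longleftrightarrow> cond3 X Ls)"
proof -
  interpret liner_space X Ls using assms by unfold_locales
  show ?thesis
    using proclus_imp_cond3 cond3_imp_proclus cond3_imp_proaffine cond3_imp_proregular3
      proaffine_proregular3_imp_cond3 by blast
qed

end
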